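(* Let $\Sigma$ be a finite alphabet with $|\Sigma|\ge 2$, let $m,n$ be positive integers with $m\ge 2$, and let $\rho,\rho_1,\rho_2,\rho_3$ be real numbers with $0<\rho<1$, $\rho_1>0$, $\rho_2>0$, $\rho_3>0$ and $\rho_1+\rho_2+\rho_3\le 1$. Then the Markov chains with transition matrices $S^{\mathfrak{N}(n)}_{\rho_1,\rho_2,\rho_3}$, $S^{\mathfrak{N}_m(n)}_{\rho_1,\rho_2,\rho_3}$ and $S^{\mathfrak{N}'_m(n)}_{\rho_1,\rho_2,\rho_3}$ are aperiodic, and so are the Markov chains with transition matrices $S^{\mathfrak{N}(n)^\bullet}_{\rho}$, $S^{\mathfrak{N}_m(n)^\bullet}_{\rho}$ and $S^{\mathfrak{N}'_m(n)^\bullet}_{\rho}$.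
   Context: A non-deterministic automaton (NFA) over $\Sigma$ is a tuple $(Q,\Sigma,\Delta,I,F)$ with $Q$ a finite set of states, $\Delta\subseteq Q\times\Sigma\times Q$ the transitions, $I\subseteq Q$ the initial states and $F\subseteq Q$ the final states. A path is a sequence of transitions $(p_0,a_0,q_0)\cdots(p_k,a_k,q_k)$ with $q_i=p_{i+1}$. The NFA is accessible if every state is reachable by a path from an initial state, co-accessible if from every state a final state is reachable by a path, and trim if both. $\mathfrak{N}(n)$ is the set of trim NFAs over $\Sigma$ with state set $Q=\{1,\dots,n\}$. $\mathfrak{N}_m(n)$ is the set of automata in $\mathfrak{N}(n)$ such that for each state $p$ there are at most $m$ pairs $(a,q)$ with $(p,a,q)\in\Delta$. $\mathfrak{N}'_m(n)$ is the set of automata in $\mathfrak{N}(n)$ such that for each state $p$ and each letter $a$ there are at most $m$ states $q$ with $(p,a,q)\in\Delta$. For a class $\mathfrak{X}$, $\mathfrak{X}^\bullet$ is the subclass of automata whose set of initial states is exactly $\{1\}$. For an automaton $\mathcal{A}=(Q,\Sigma,\Delta,I,F)$: $\mathsf{Ch_{init}}(\mathcal{A},q)$ is $\mathcal{A}$ with $q$ removed from $I$ if $q\in I$ and added to $I$ otherwise; $\mathsf{Ch_{final}}(\mathcal{A},q)$ is defined similarly with $F$; $\mathsf{Ch_{trans}}(\mathcal{A},(p,a,q))$ is $\mathcal{A}$ with $(p,a,q)$ removed from $\Delta$ if present and added otherwise. For a class $\mathfrak{X}$ of automata with state set $Q=\{1,\dots,n\}$ and reals $\rho_i\in[0,1]$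 with $\rho_1+\rho_2+\rho_3\le1$, the matrix $S^{\mathfrak{X}}_{\rho_1,\rho_2,\rho_3}$ on $\mathfrak{X}\times\mathfrak{X}$ is: for $x\ne y$, $S(x,y)=\rho_1/n$ if $y=\mathsf{Ch_{init}}(x,q)$ for some $q$; $S(x,y)=\rho_2/n$ if $y=\mathsf{Ch_{final}}(x,q)$ for some $q$; $S(x,y)=\rho_3/(|\Sigma|n^2)$ if $y=\mathsf{Ch_{trans}}(x,(p,a,q))$ for some $(p,a,q)\in Q\times\Sigma\times Q$; $S(x,y)=0$ otherwise; and $S(x,x)=1-\sum_{y\ne x}S(x,y)$. For $\mathfrak{X}\in\{\mathfrak{N}(n),\mathfrak{N}_m(n),\mathfrak{N}'_m(n)\}$ and $0<\rho<1$, $S^{\mathfrak{X}^\bullet}_\rho$ is the matrix $S^{\mathfrak{X}^\bullet}_{0,\rho,1-\rho}$ defined by the same rules on the class $\mathfrak{X}^\bullet$. A Markov chain is aperiodic if for every state $x$ the gcd of the lengths of all cycles through $x$ in the graph of nonzero transition probabilities is $1$. *)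

theory Defs
  imports Complex_Main
begin

text \<open>NFAs over the alphabet given by the finite type 'a, with states natural numbers;
  the state set is Q = {1..n}.\<close>

record 'a nfa =
  trans :: "(nat \<times> 'a \<times> nat) set"
  init  :: "nat set"
  fin   :: "nat set"

definition states :: "nat \<Rightarrow> nat set" where
  "states n = {1..n}"

definition well_formed :: "nat \<Rightarrow> 'a nfa \<Rightarrow> bool" where
  "well_formed n A \<longleftrightarrow> trans A \<subseteq> states n \<times> UNIV \<times> states n
      \<and> init A \<subseteq> states n \<and> fin A \<subseteq> states n"

definition step_rel :: "'a nfa \<Rightarrow> (nat \<times> nat) set" where
  "step_rel A = {(p, q). \<exists>a. (p, a, q) \<in> trans A}"

definition accessible :: "nat \<Rightarrow> 'a nfa \<Rightarrow> bool" where
  "accessible n A \<longleftrightarrow> (\<forall>q\<in>states n. \<exists>i\<in>init A. (i, q) \<in> (step_rel A)\<^sup>*)"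

definition coaccessible :: "nat \<Rightarrow> 'a nfa \<Rightarrow> bool" where
  "coaccessible n A \<longleftrightarrow> (\<forall>q\<in>states n. \<exists>f\<in>fin A. (q, f) \<in> (step_rel A)\<^sup>*)"

definition trim :: "nat \<Rightarrow> 'a nfa \<Rightarrow> bool" where
  "trim n A \<longleftrightarrow> accessible n A \<and> coaccessible n A"

definition NFA_trim :: "nat \<Rightarrow> 'a nfa set" where
  "NFA_trim n = {A. well_formed n A \<and> trim n A}"

definition NFA_m :: "nat \<Rightarrow> nat \<Rightarrow> 'a nfa set" where
  "NFA_m m n = {A \<in> NFA_trim n. \<forall>p. card {(a, q). (p, a, q) \<in> trans A} \<le> m}"

definition NFA'_m :: "nat \<Rightarrow> nat \<Rightarrow> 'a nfa set" where
  "NFA'_m m n = {A \<in> NFA_trim n. \<forall>p a. card {q. (p, a, q) \<in> trans A} \<le> m}"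

definition bullet :: "'a nfa set \<Rightarrow> 'a nfa set" where
  "bullet X = {A \<in> X. init A = {1}}"

definition toggle :: "'b \<Rightarrow> 'b set \<Rightarrow> 'b set" where
  "toggle x S = (if x \<in> S then S - {x} else insert x S)"

definition Ch_init :: "'a nfa \<Rightarrow> nat \<Rightarrow> 'a nfa" where
  "Ch_init A q = A\<lparr>init := toggle q (init A)\<rparr>"

definition Ch_final :: "'a nfa \<Rightarrow> nat \<Rightarrow> 'a nfa" where
  "Ch_final A q = A\<lparr>fin := toggle q (fin A)\<rparr>"

definition Ch_trans :: "'a nfa \<Rightarrow> nat \<times> 'a \<times> nat \<Rightarrow> 'a nfa" where
  "Ch_trans A t = A\<lparr>trans := toggle t (trans A)\<rparr>"

definition S_off :: "nat \<Rightarrow> real \<Rightarrow> real \<Rightarrow> real \<Rightarrow> 'a nfa \<Rightarrow> 'a nfa \<Rightarrow> real" where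
  "S_off n r1 r2 r3 x y =
     (if \<exists>q\<in>states n. y = Ch_init x q then r1 / real n
      else if \<exists>q\<in>states n. y = Ch_final x q then r2 / real n
      else if \<exists>t\<in>states n \<times> UNIV \<times> states n. y = Ch_trans x t
        then r3 / (real (card (UNIV :: 'a set)) * real n ^ 2)
      else 0)"

text \<open>The matrix S^X_{r1,r2,r3} on X \<times> X (values outside X \<times> X are irrelevant).\<close>
definition S_mat :: "'a nfa set \<Rightarrow> nat \<Rightarrow> real \<Rightarrow> real \<Rightarrow> real \<Rightarrow> 'a nfa \<Rightarrow> 'a nfa \<Rightarrow> real" where
  "S_mat X n r1 r2 r3 x y =
     (if x = y then 1 - (\<Sum>z\<in>X - {x}. S_off n r1 r2 r3 x z)
      else S_off n r1 r2 r3 x y)"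

definition chain_graph :: "'s set \<Rightarrow> ('s \<Rightarrow> 's \<Rightarrow> real) \<Rightarrow> ('s \<times> 's) set" where
  "chain_graph X P = {(x, y). x \<in> X \<and> y \<in> X \<and> P x y \<noteq> 0}"

definition aperiodic :: "'s set \<Rightarrow> ('s \<Rightarrow> 's \<Rightarrow> real) \<Rightarrow> bool" where
  "aperiodic X P \<longleftrightarrow>
     (\<forall>x\<in>X. Gcd {k::nat. k > 0 \<and> (x, x) \<in> (chain_graph X P) ^^ k} = 1)"

end

theory Submission
  imports Defs
begin

text \<open>Every trim automaton with at least one state has a final state f. Toggling the finality
  of f either leaves the class, in which case this move of probability \<rho>2/n is absorbed
  into the diagonal and the automaton carries a self-loop; or it gives a neighbour with one final
  state fewer that the chain reaches and leaves by the same move with probability \<rho>2/n.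
  Descending on the number of final states, every automaton lies on a closed walk of odd length,
  and it carries either a self-loop or a closed walk of length 2; hence the gcd of its cycle
  lengths is 1.\<close>

lemma Gcd_eq_1_if_coprime_mem:
  fixes a b :: nat
  assumes "a \<in> S" "b \<in> S" "coprime a b"
  shows "Gcd S = 1"
  using coprime_common_divisor[OF assms(3) Gcd_dvd[OF assms(1)] Gcd_dvd[OF assms(2)]] by simp

lemma odd_closed_walk_if_loop_or_descending_2cycle:
  fixes \<mu> :: "'s \<Rightarrow> nat"
  assumes step: "\<And>x. x \<in> X \<Longrightarrow> (x, x) \<in> G \<or> (\<exists>y\<in>X. (x, y) \<in> G \<and> (y, x) \<in> G \<and> \<mu> y < \<mu> x)"
    and "x \<in> X"
  shows "\<exists>k. odd k \<and> (x, x) \<in> G ^^ k"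
  using \<open>x \<in> X\<close>
proof (induction "\<mu> x" arbitrary: x rule: less_induct)
  case less
  from step[OF less.prems] show ?case
  proof
    assume "(x, x) \<in> G"
    then show ?thesis by (intro exI[of _ 1]) simp
  next
    assume "\<exists>y\<in>X. (x, y) \<in> G \<and> (y, x) \<in> G \<and> \<mu> y < \<mu> x"
    then obtain y where y: "y \<in> X" "(x, y) \<in> G" "(y, x) \<in> G" "\<mu> y < \<mu> x" by blast
    then obtain k where "odd k" "(y, y) \<in> G ^^ k" using less.hyps by blast
    then have "(x, x) \<in> G ^^ Suc (Suc k)"
      using y by (meson relpow_Suc_I relpow_Suc_I2)
    with \<open>odd k\<close> show ?thesis by (intro exI[of _ "Suc (Suc k)"]) simp
  qed
qed

lemma aperiodic_if_loop_or_descending_2cycle: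
  fixes \<mu> :: "'s \<Rightarrow> nat"
  assumes step: "\<And>x. x \<in> X \<Longrightarrow> (x, x) \<in> chain_graph X P \<or>
      (\<exists>y\<in>X. (x, y) \<in> chain_graph X P \<and> (y, x) \<in> chain_graph X P \<and> \<mu> y < \<mu> x)"
  shows "aperiodic X P"
  unfolding aperiodic_def
proof
  fix x assume "x \<in> X"
  let ?G = "chain_graph X P"
  let ?S = "{k. 0 < k \<and> (x, x) \<in> ?G ^^ k}"
  obtain k where k: "odd k" "(x, x) \<in> ?G ^^ k"
    using odd_closed_walk_if_loop_or_descending_2cycle[OF step \<open>x \<in> X\<close>] by blast
  then have "k \<in> ?S" by (auto intro: odd_pos)
  from step[OF \<open>x \<in> X\<close>] show "Gcd ?S = 1"
  proof
    assume "(x, x) \<in> ?G"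
    then have "1 \<in> ?S" by simp
    then show ?thesis by (simp add: Gcd_nat_eq_one)
  next
    assume "\<exists>y\<in>X. (x, y) \<in> ?G \<and> (y, x) \<in> ?G \<and> \<mu> y < \<mu> x"
    then have "2 \<in> ?S" by (auto simp: numeral_2_eq_2 relcomp_unfold)
    with \<open>k \<in> ?S\<close> \<open>odd k\<close> show ?thesis by (intro Gcd_eq_1_if_coprime_mem[of 2 _ k]) auto
  qed
qed

lemma toggle_neq: "toggle a S \<noteq> S"
  unfolding toggle_def by auto

lemma Ch_final_Ch_final [simp]: "Ch_final (Ch_final x f) f = x"
  unfolding Ch_final_def toggle_def by (auto simp: insert_absorb)

lemma Ch_final_neq: "Ch_final x f \<noteq> x"
  by (metis Ch_final_def ext_inject nfa.surjective nfa.update_convs(3) toggle_neq)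

lemma Ch_final_neq_Ch_init: "Ch_final x f \<noteq> Ch_init x q"
  by (metis Ch_final_def Ch_init_def nfa.select_convs(3) nfa.surjective nfa.update_convs toggle_neq)

lemma S_off_Ch_final:
  assumes "f \<in> states n"
  shows "S_off n r1 r2 r3 x (Ch_final x f) = r2 / real n"
  using assms Ch_final_neq_Ch_init unfolding S_off_def by auto

lemma card_fin_Ch_final_less:
  assumes "f \<in> fin x" "finite (fin x)"
  shows "card (fin (Ch_final x f)) < card (fin x)"
  using card_Diff1_less[OF assms(2,1)] assms(1) by (simp add: Ch_final_def toggle_def)

lemma fin_nonempty_if_NFA_trim:
  assumes "x \<in> NFA_trim n" "n \<ge> 1"
  shows "fin x \<noteq> {}"
proof -
  have "1 \<in> states n" using assms(2) unfolding states_def by simp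
  with assms(1) show ?thesis
    unfolding NFA_trim_def trim_def coaccessible_def by auto
qed

lemma fin_subset_states_if_NFA_trim: "x \<in> NFA_trim n \<Longrightarrow> fin x \<subseteq> states n"
  unfolding NFA_trim_def well_formed_def by auto

lemma card_states [simp]: "card (states n) = n"
  and finite_states [simp]: "finite (states n)"
  unfolding states_def by simp_all

lemma card_Int_image_le: "finite S \<Longrightarrow> card (Y \<inter> g ` S) \<le> card S"
  by (meson card_image_le card_mono finite_imageI inf_le2 le_trans)

lemma card_Int_image_less:
  assumes "finite S" "s \<in> S" "g s \<notin> Y"
  shows "card (Y \<inter> g ` S) < card S"
proof -
  have "Y \<inter> g ` S \<subseteq> g ` (S - {s})" using assms(3) by auto
  then have "card (Y \<inter> g ` S) \<le> card (S - {s})"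
    using assms(1) by (meson card_image_le card_mono finite_Diff finite_imageI le_trans)
  also have "\<dots> < card S" using assms(1,2) by (rule card_Diff1_less)
  finally show ?thesis .
qed

text \<open>Each of the three kinds of moves out of x has total weight at most the corresponding r, so a
  single missing final-state move leaves a gap of r2/n below 1.\<close>
lemma sum_S_off_less_1:
  fixes x :: "'a::finite nfa"
  assumes n: "n \<ge> 1" and r: "r1 \<ge> 0" "r2 > 0" "r3 \<ge> 0" "r1 + r2 + r3 \<le> 1"
    and f: "f \<in> states n" "Ch_final x f \<notin> Y"
  shows "(\<Sum>z\<in>Y. S_off n r1 r2 r3 x z) < 1"
proof (cases "finite Y")
  case False
  then show ?thesis by simp
next
  case True
  define Ts where "Ts = states n \<times> (UNIV :: 'a set) \<times> states n"
  define a b c where "a = r1 / real n" and "b = r2 / real n"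
    and "c = r3 / (real (card (UNIV :: 'a set)) * real n ^ 2)"
  have "n > 0" using n by simp
  have abc: "a \<ge> 0" "b > 0" "c \<ge> 0" using r \<open>n > 0\<close> unfolding a_def b_def c_def by auto
  have "card Ts = card (UNIV :: 'a set) * n ^ 2"
    unfolding Ts_def by (simp add: card_cartesian_product power2_eq_square)
  then have c_Ts: "c * card Ts = r3"
    using \<open>n > 0\<close> unfolding c_def by (simp add: finite_UNIV_card_ge_0)
  have "S_off n r1 r2 r3 x z \<le> a * of_bool (z \<in> Ch_init x ` states n)
      + b * of_bool (z \<in> Ch_final x ` states n) + c * of_bool (z \<in> Ch_trans x ` Ts)" for z
    using abc by (auto simp: S_off_def a_def b_def c_def Ts_def)
  then have "(\<Sum>z\<in>Y. S_off n r1 r2 r3 x z) \<le> (\<Sum>z\<in>Y. a * of_bool (z \<in> Ch_init x ` states n)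
      + b * of_bool (z \<in> Ch_final x ` states n) + c * of_bool (z \<in> Ch_trans x ` Ts))"
    by (rule sum_mono)
  also have "\<dots> = a * card (Y \<inter> Ch_init x ` states n)
      + b * card (Y \<inter> Ch_final x ` states n) + c * card (Y \<inter> Ch_trans x ` Ts)"
    using True by (simp add: sum.distrib sum_distrib_left[symmetric] sum_of_bool_eq Int_def)
  also have "\<dots> \<le> a * n + b * (n - 1) + c * card Ts"
  proof -
    have "card (Y \<inter> Ch_final x ` states n) \<le> n - 1"
      using card_Int_image_less[of "states n" f "Ch_final x" Y] f by simp
    moreover have "card (Y \<inter> Ch_trans x ` Ts) \<le> card Ts"
      unfolding Ts_def by (rule card_Int_image_le) simp
    ultimately show ?thesis
      using abc card_Int_image_le[OF finite_states, of Y "Ch_init x" n]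
      by (intro add_mono mult_left_mono) (simp_all add: of_nat_diff)
  qed
  also have "\<dots> = r1 + r2 - b + r3"
    using \<open>n > 0\<close> c_Ts unfolding a_def b_def by (simp add: of_nat_diff field_simps)
  finally show ?thesis using abc r by linarith
qed

lemma aperiodic_S_mat_if_subset_NFA_trim:
  fixes X :: "'a::finite nfa set"
  assumes X: "X \<subseteq> NFA_trim n" and n: "n \<ge> 1"
    and r: "r1 \<ge> 0" "r2 > 0" "r3 \<ge> 0" "r1 + r2 + r3 \<le> 1"
  shows "aperiodic X (S_mat X n r1 r2 r3)"
proof (rule aperiodic_if_loop_or_descending_2cycle[where \<mu> = "\<lambda>x. card (fin x)"])
  let ?G = "chain_graph X (S_mat X n r1 r2 r3)"
  fix x assume "x \<in> X"
  then obtain f where f: "f \<in> fin x" using X fin_nonempty_if_NFA_trim[OF _ n] by blast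
  have f_state: "f \<in> states n" using f \<open>x \<in> X\<close> X fin_subset_states_if_NFA_trim by blast
  let ?y = "Ch_final x f"
  show "(x, x) \<in> ?G \<or> (\<exists>y\<in>X. (x, y) \<in> ?G \<and> (y, x) \<in> ?G \<and> card (fin y) < card (fin x))"
  proof (cases "?y \<in> X")
    case False
    then have "(\<Sum>z\<in>X - {x}. S_off n r1 r2 r3 x z) < 1"
      using sum_S_off_less_1[OF n r f_state, of x "X - {x}"] by simp
    then have "S_mat X n r1 r2 r3 x x \<noteq> 0" by (simp add: S_mat_def)
    then have "(x, x) \<in> ?G" using \<open>x \<in> X\<close> by (simp add: chain_graph_def)
    then show ?thesis ..
  next
    case True
    have "?y \<noteq> x" by (rule Ch_final_neq)
    then have "S_mat X n r1 r2 r3 x ?y = r2 / real n" "S_mat X n r1 r2 r3 ?y x = r2 / real n"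
      using S_off_Ch_final[OF f_state, of r1 r2 r3 x] S_off_Ch_final[OF f_state, of r1 r2 r3 ?y]
      by (simp_all add: S_mat_def)
    moreover have "r2 / real n \<noteq> 0" using r n by simp
    ultimately have "(x, ?y) \<in> ?G" "(?y, x) \<in> ?G"
      using True \<open>x \<in> X\<close> unfolding chain_graph_def by simp_all
    moreover have "card (fin ?y) < card (fin x)"
      using card_fin_Ch_final_less f X \<open>x \<in> X\<close>
        finite_subset[OF fin_subset_states_if_NFA_trim finite_states] by blast
    ultimately show ?thesis using True by blast
  qed
qed

theorem lemma2:
  fixes m n :: nat and \<rho> \<rho>1 \<rho>2 \<rho>3 :: real
  assumes "card (UNIV :: 'a::finite set) \<ge> 2"
    and "m \<ge> 2" and "n \<ge> 1"
    and "0 < \<rho>" and "\<rho> < 1"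
    and "\<rho>1 > 0" and "\<rho>2 > 0" and "\<rho>3 > 0" and "\<rho>1 + \<rho>2 + \<rho>3 \<le> 1"
  shows "aperiodic (NFA_trim n :: 'a nfa set) (S_mat (NFA_trim n) n \<rho>1 \<rho>2 \<rho>3)
       \<and> aperiodic (NFA_m m n :: 'a nfa set) (S_mat (NFA_m m n) n \<rho>1 \<rho>2 \<rho>3)
       \<and> aperiodic (NFA'_m m n :: 'a nfa set) (S_mat (NFA'_m m n) n \<rho>1 \<rho>2 \<rho>3)
       \<and> aperiodic (bullet (NFA_trim n) :: 'a nfa set)
           (S_mat (bullet (NFA_trim n)) n 0 \<rho> (1 - \<rho>))
       \<and> aperiodic (bullet (NFA_m m n) :: 'a nfa set)
           (S_mat (bullet (NFA_m m n)) n 0 \<rho> (1 - \<rho>))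
       \<and> aperiodic (bullet (NFA'_m m n) :: 'a nfa set)
           (S_mat (bullet (NFA'_m m n)) n 0 \<rho> (1 - \<rho>))"
proof -
  have sub: "NFA_trim n \<subseteq> NFA_trim n" "NFA_m m n \<subseteq> NFA_trim n" "NFA'_m m n \<subseteq> NFA_trim n"
    unfolding NFA_m_def NFA'_m_def by auto
  then have sub_bullet: "bullet (NFA_trim n) \<subseteq> NFA_trim n"
      "bullet (NFA_m m n) \<subseteq> NFA_trim n" "bullet (NFA'_m m n) \<subseteq> NFA_trim n"
    unfolding bullet_def by auto
  have r: "\<rho>1 \<ge> 0" "\<rho>2 > 0" "\<rho>3 \<ge> 0" "\<rho>1 + \<rho>2 + \<rho>3 \<le> 1"
    and r_bullet: "(0::real) \<ge> 0" "\<rho> > 0" "1 - \<rho> \<ge> 0" "0 + \<rho> + (1 - \<rho>) \<le> 1"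
    using assms by auto
  show ?thesis
    using aperiodic_S_mat_if_subset_NFA_trim[OF sub(1) \<open>n \<ge> 1\<close> r]
      aperiodic_S_mat_if_subset_NFA_trim[OF sub(2) \<open>n \<ge> 1\<close> r]
      aperiodic_S_mat_if_subset_NFA_trim[OF sub(3) \<open>n \<ge> 1\<close> r]
      aperiodic_S_mat_if_subset_NFA_trim[OF sub_bullet(1) \<open>n \<ge> 1\<close> r_bullet]
      aperiodic_S_mat_if_subset_NFA_trim[OF sub_bullet(2) \<open>n \<ge> 1\<close> r_bullet]
      aperiodic_S_mat_if_subset_NFA_trim[OF sub_bullet(3) \<open>n \<ge> 1\<close> r_bullet]
    by blast
qed

end
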